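(* Let $\alpha\in(0,\pi)$ and let $G\subset\mathbb{R}^2$ be a domain (not necessarily contained in $S_\alpha$) such that for some $r>0$, \[ G\cap B^2(r)=S_\alpha\cap B^2(r). \] Then $A_G\ge A_{S_\alpha}$.
   Context: $S_\alpha=\{\rho e^{it}:\rho>0,\ t\in(0,\alpha)\}\subset\mathbb{R}^2=\mathbb{C}$, and $B^2(r)$ is the open disk of radius $r$ centered at the origin. For a domain $G\subsetneq\mathbb{R}^n$ let $d_G(x)=d(x,\partial G)$; $k_G(x,y)=\inf_\gamma\int_\gamma\frac{|dx|}{d_G(x)}$ over rectifiable curves $\gamma\subset G$ joining $x,y$ (quasihyperbolic distance); $j_G(x,y)=\log\left(1+\frac{|x-y|}{\min\{d_G(x),d_G(y)\}}\right)$; and $A_G=\inf\{A\ge1: k_G\le A\,j_G\text{ on }G\times G\}$ (with $\inf\emptyset=+\infty$). *)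

theory Defs
  imports "HOL-Analysis.Analysis"
begin

text \<open>The plane R^2 is identified with the complex numbers.\<close>

definition sector :: "real \<Rightarrow> complex set" where
  "sector \<alpha> = {z. \<exists>\<rho>>0. \<exists>t\<in>{0<..<\<alpha>}. z = complex_of_real \<rho> * cis t}"

definition dG :: "complex set \<Rightarrow> complex \<Rightarrow> real" where
  "dG G x = infdist x (frontier G)"

definition poly_sum :: "(real \<Rightarrow> complex) \<Rightarrow> real list \<Rightarrow> real" where
  "poly_sum g ts = (\<Sum>i<length ts - 1. dist (g (ts ! Suc i)) (g (ts ! i)))"

definition rectifiable_path :: "(real \<Rightarrow> complex) \<Rightarrow> bool" where
  "rectifiable_path g \<longleftrightarrow> path g \<and>
     bdd_above (poly_sum g ` {ts. sorted ts \<and> set ts \<subseteq> {0..1}})"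

definition arc_len :: "(real \<Rightarrow> complex) \<Rightarrow> real \<Rightarrow> real" where
  "arc_len g t = (SUP ts \<in> {ts. sorted ts \<and> set ts \<subseteq> {0..max 0 (min 1 t)}}. poly_sum g ts)"

definition qh_length :: "complex set \<Rightarrow> (real \<Rightarrow> complex) \<Rightarrow> ennreal" where
  "qh_length G g = (\<integral>\<^sup>+ t \<in> {0..1}. ennreal (1 / dG G (g t)) \<partial>(interval_measure (arc_len g)))"

definition qh_dist :: "complex set \<Rightarrow> complex \<Rightarrow> complex \<Rightarrow> ennreal" where
  "qh_dist G x y = Inf {qh_length G g | g. rectifiable_path g \<and> path_image g \<subseteq> G
                          \<and> pathstart g = x \<and> pathfinish g = y}"

definition j_dist :: "complex set \<Rightarrow> complex \<Rightarrow> complex \<Rightarrow> real" where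
  "j_dist G x y = ln (1 + dist x y / min (dG G x) (dG G y))"

definition A_const :: "complex set \<Rightarrow> ereal" where
  "A_const G = Inf (ereal ` {A. A \<ge> 1 \<and> (\<forall>x\<in>G. \<forall>y\<in>G. qh_dist G x y \<le> ennreal (A * j_dist G x y))})"

end

theory Submission
  imports Defs
begin

text \<open>Quasihyperbolic and \<open>j\<close>-distances in the sector \<open>S\<close> are invariant under dilations, and in
  \<open>ball 0 (r/2)\<close> the distance to the boundary of \<open>G\<close> agrees with the distance to the boundary
  of \<open>S\<close>. Given \<open>x, y \<in> S\<close> and a constant \<open>A\<close> that works for \<open>G\<close>, shrink \<open>x, y\<close> by a small
  factor \<open>t\<close>: the \<open>j\<close>-distance of \<open>t x, t y\<close> in \<open>G\<close> is that of \<open>x, y\<close> in \<open>S\<close>, so some path in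
  \<open>G\<close> from \<open>t x\<close> to \<open>t y\<close> has quasihyperbolic length barely above \<open>A j\<^sub>S(x, y)\<close>. Since the vertex
  is a boundary point of \<open>G\<close>, every passage of a path from radius \<open>R\<close> to radius \<open>2R\<close> costs
  quasihyperbolic length at least \<open>1/2\<close>; for small \<open>t\<close> the path therefore never leaves
  \<open>ball 0 (r/2)\<close>. So it runs in \<open>S\<close> with the same length there, and scaling it back by \<open>1/t\<close>
  gives \<open>k\<^sub>S(x, y) \<le> A j\<^sub>S(x, y)\<close>.\<close>

section \<open>Polygonal sums and variation\<close>

lemma poly_sum_Nil [simp]: "poly_sum g [] = 0"
  and poly_sum_singleton [simp]: "poly_sum g [x] = 0"
  by (simp_all add: poly_sum_def)

lemma poly_sum_Cons_Cons [simp]: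
  "poly_sum g (x # y # ys) = dist (g y) (g x) + poly_sum g (y # ys)"
  unfolding poly_sum_def by (simp add: sum.lessThan_Suc_shift del: sum.lessThan_Suc)

lemma poly_sum_nonneg: "0 \<le> poly_sum g ts"
  by (simp add: poly_sum_def sum_nonneg)

lemma poly_sum_append_Cons:
  "poly_sum g (xs @ s # ys) = poly_sum g (xs @ [s]) + poly_sum g (s # ys)"
proof (induction xs)
  case (Cons x xs)
  then show ?case by (cases xs) auto
qed simp

lemma poly_sum_le_Cons: "poly_sum g ts \<le> poly_sum g (a # ts)"
  by (cases ts) (auto simp: poly_sum_nonneg)

lemma poly_sum_le_snoc: "poly_sum g ts \<le> poly_sum g (ts @ [a])"
proof (cases ts rule: rev_cases)
  case (snoc xs x)
  then show ?thesis
    using poly_sum_append_Cons[of g xs x "[a]"] by simp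
qed simp

lemma poly_sum_le_insert: "poly_sum g (xs @ ys) \<le> poly_sum g (xs @ a # ys)"
proof (cases xs rule: rev_cases)
  case Nil
  then show ?thesis by (simp add: poly_sum_le_Cons)
next
  case (snoc xs' u)
  show ?thesis
  proof (cases ys)
    case Nil
    then show ?thesis using poly_sum_le_snoc[of g xs a] by simp
  next
    case (Cons v ys')
    have "dist (g v) (g u) \<le> dist (g a) (g u) + dist (g v) (g a)"
      by (metis dist_commute dist_triangle)
    then show ?thesis
      using snoc Cons poly_sum_append_Cons[of g xs' u "v # ys'"]
        poly_sum_append_Cons[of g xs' u "a # v # ys'"] by simp
  qed
qed

lemma poly_sum_Cons_le: "poly_sum g (a # xs) \<le> dist (g a) (g s) + poly_sum g (s # xs)"
proof (cases xs)
  case (Cons v ys)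
  have "dist (g v) (g a) \<le> dist (g v) (g s) + dist (g a) (g s)"
    by (metis dist_commute dist_triangle)
  then show ?thesis using Cons by simp
qed simp

lemma poly_sum_merge_le:
  "poly_sum g (L1 @ L2) + poly_sum g M
     \<le> poly_sum g (L1 @ a # M @ s # L2) + dist (g a) (g s)"
proof -
  have "poly_sum g (L1 @ L2) \<le> poly_sum g (L1 @ [a]) + poly_sum g (a # L2)"
    using poly_sum_le_insert[of g L1 L2 a] poly_sum_append_Cons[of g L1 a L2] by simp
  moreover have "poly_sum g (a # L2) \<le> dist (g a) (g s) + poly_sum g (s # L2)"
    by (rule poly_sum_Cons_le)
  moreover have "poly_sum g M \<le> poly_sum g ((a # M) @ [s])"
    using poly_sum_le_Cons[of g M a] poly_sum_le_snoc[of g "a # M" s] by simp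
  moreover have "poly_sum g (L1 @ a # M @ s # L2)
      = poly_sum g (L1 @ [a]) + poly_sum g ((a # M) @ [s]) + poly_sum g (s # L2)"
    using poly_sum_append_Cons[of g L1 a "M @ s # L2"] poly_sum_append_Cons[of g "a # M" s L2]
    by simp
  ultimately show ?thesis by linarith
qed

lemma poly_sum_scaleR:
  assumes "c \<ge> 0" shows "poly_sum (\<lambda>s. c *\<^sub>R g s) ts = c * poly_sum g ts"
proof -
  have "dist (c *\<^sub>R x) (c *\<^sub>R y) = c * dist x y" for x y :: complex
    using assms by (simp add: dist_norm flip: scaleR_diff_right)
  then show ?thesis by (simp add: poly_sum_def sum_distrib_left)
qed

lemma sorted_split_le_gt:
  fixes L :: "'a::linorder list"
  assumes "sorted L"
  obtains L1 L2 where "L = L1 @ L2" "sorted L1" "sorted L2" "\<forall>x\<in>set L1. x \<le> a" "\<forall>x\<in>set L2. a < x"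
proof
  show "L = takeWhile (\<lambda>x. x \<le> a) L @ dropWhile (\<lambda>x. x \<le> a) L" by simp
  show "\<forall>x\<in>set (dropWhile (\<lambda>x. x \<le> a) L). a < x"
    using assms by (induction L) auto
qed (use assms in \<open>auto simp: sorted_takeWhile sorted_dropWhile dest: set_takeWhileD\<close>)

definition sorted_lists_in :: "real \<Rightarrow> real \<Rightarrow> real list set" where
  "sorted_lists_in a b = {ts. sorted ts \<and> set ts \<subseteq> {a..b}}"

definition variation :: "(real \<Rightarrow> complex) \<Rightarrow> real \<Rightarrow> real \<Rightarrow> real" where
  "variation g a b = (SUP ts \<in> sorted_lists_in a b. poly_sum g ts)"

lemma arc_len_eq_variation: "arc_len g t = variation g 0 (max 0 (min 1 t))"
  by (simp add: arc_len_def variation_def sorted_lists_in_def)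

lemma sorted_lists_in_mono: "c \<le> a \<Longrightarrow> b \<le> d \<Longrightarrow> sorted_lists_in a b \<subseteq> sorted_lists_in c d"
  by (auto simp: sorted_lists_in_def)

lemma Nil_in_sorted_lists_in [simp]: "[] \<in> sorted_lists_in a b"
  by (simp add: sorted_lists_in_def)

lemma rectifiable_path_bdd_above:
  assumes "rectifiable_path g" "0 \<le> a" "b \<le> 1"
  shows "bdd_above (poly_sum g ` sorted_lists_in a b)"
proof -
  have "bdd_above (poly_sum g ` sorted_lists_in 0 1)"
    using assms(1) by (simp add: rectifiable_path_def sorted_lists_in_def)
  then show ?thesis
    by (rule bdd_above_mono) (use sorted_lists_in_mono[OF assms(2,3)] in auto)
qed

lemma variation_upper:
  assumes "rectifiable_path g" "0 \<le> a" "b \<le> 1" "ts \<in> sorted_lists_in a b"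
  shows "poly_sum g ts \<le> variation g a b"
  unfolding variation_def by (rule cSUP_upper[OF assms(4) rectifiable_path_bdd_above[OF assms(1-3)]])

lemma variation_least:
  assumes "\<And>ts. ts \<in> sorted_lists_in a b \<Longrightarrow> poly_sum g ts \<le> M"
  shows "variation g a b \<le> M"
  unfolding variation_def by (rule cSUP_least) (use assms Nil_in_sorted_lists_in in blast)+

lemma variation_mono:
  assumes "rectifiable_path g" "0 \<le> c" "c \<le> a" "b \<le> d" "d \<le> 1"
  shows "variation g a b \<le> variation g c d"
  by (rule variation_least, rule variation_upper) (use assms sorted_lists_in_mono[of c a b d] in auto)

lemma variation_split_le:
  assumes "rectifiable_path g" "0 \<le> a" "a \<le> s" "s \<le> 1"
  shows "variation g 0 s \<le> variation g 0 a + variation g a s"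
proof (rule variation_least)
  fix L assume L: "L \<in> sorted_lists_in 0 s"
  then obtain L1 L2 where L12: "L = L1 @ L2" "sorted L1" "sorted L2"
    "\<forall>x\<in>set L1. x \<le> a" "\<forall>x\<in>set L2. a < x"
    using sorted_split_le_gt[of L a] by (auto simp: sorted_lists_in_def)
  have "L1 @ [a] \<in> sorted_lists_in 0 a" "a # L2 \<in> sorted_lists_in a s"
    using L L12 assms by (auto simp: sorted_lists_in_def sorted_append less_imp_le)
  then have "poly_sum g (L1 @ [a]) + poly_sum g (a # L2) \<le> variation g 0 a + variation g a s"
    using assms by (intro add_mono variation_upper) auto
  moreover have "poly_sum g L \<le> poly_sum g (L1 @ [a]) + poly_sum g (a # L2)"
    using poly_sum_le_insert[of g L1 L2 a] poly_sum_append_Cons[of g L1 a L2] L12(1) by simp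
  ultimately show "poly_sum g L \<le> variation g 0 a + variation g a s" by linarith
qed

lemma merge_in_sorted_lists_in:
  assumes L: "L1 @ L2 \<in> sorted_lists_in a b" and M: "M \<in> sorted_lists_in a s"
    and L1: "\<forall>x\<in>set L1. x \<le> a" and L2: "\<forall>x\<in>set L2. s < x" and "a \<le> s" "s \<le> b"
  shows "L1 @ a # M @ s # L2 \<in> sorted_lists_in a b"
proof -
  have sorted: "sorted L1" "sorted L2" "sorted M" and sets: "set L1 \<union> set L2 \<subseteq> {a..b}" "set M \<subseteq> {a..s}"
    using L M by (auto simp: sorted_lists_in_def sorted_append)
  have "\<forall>x\<in>set M. \<forall>y\<in>set (s # L2). x \<le> y"
  proof (intro ballI)
    fix x y assume "x \<in> set M" "y \<in> set (s # L2)"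
    then have "x \<le> s" "s \<le> y" using sets(2) L2 by auto
    then show "x \<le> y" by linarith
  qed
  then have sorted_aM: "sorted (a # M @ s # L2)"
    using sorted sets(2) L2 \<open>a \<le> s\<close> by (auto simp: sorted_append less_imp_le)
  have "\<forall>x\<in>set L1. \<forall>y\<in>set (a # M @ s # L2). x \<le> y"
  proof (intro ballI)
    fix x y assume "x \<in> set L1" "y \<in> set (a # M @ s # L2)"
    then have "x \<le> a" "a \<le> y" using L1 sorted_aM by auto
    then show "x \<le> y" by linarith
  qed
  then have "sorted (L1 @ a # M @ s # L2)"
    using sorted_aM sorted(1) by (simp add: sorted_append)
  moreover have "set (L1 @ a # M @ s # L2) \<subseteq> {a..b}"
    using sets L2 assms(5,6) by auto
  ultimately show ?thesis by (simp add: sorted_lists_in_def)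
qed

lemma poly_sum_merge_le_variation:
  assumes g: "rectifiable_path g" and "0 \<le> a" "a \<le> s" "s \<le> b" "b \<le> 1"
    and L: "L \<in> sorted_lists_in a b" and M: "M \<in> sorted_lists_in a s"
    and gap: "\<forall>x\<in>set L. a < x \<longrightarrow> s < x"
  shows "poly_sum g L + poly_sum g M \<le> variation g a b + dist (g a) (g s)"
proof -
  have "sorted L" using L by (simp add: sorted_lists_in_def)
  then obtain L1 L2 where L12: "L = L1 @ L2" "\<forall>x\<in>set L1. x \<le> a" "\<forall>x\<in>set L2. a < x"
    by (metis sorted_split_le_gt)
  then have "L1 @ a # M @ s # L2 \<in> sorted_lists_in a b"
    using L M gap assms(3,4) by (intro merge_in_sorted_lists_in) auto
  then have "poly_sum g (L1 @ a # M @ s # L2) \<le> variation g a b"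
    using assms by (intro variation_upper) auto
  then show ?thesis
    using poly_sum_merge_le[of g L1 L2 M a s] unfolding L12(1) by linarith
qed

lemma eventually_variation_at_right_le:
  assumes g: "rectifiable_path g" and a: "0 \<le> a" "a < 1" and e: "e > 0"
  shows "\<forall>\<^sub>F s in at_right a. variation g a s \<le> e"
proof -
  \<comment> \<open>A partition \<open>L\<close> of \<open>[a, 1]\<close> that is almost optimal leaves little room for variation on
    \<open>[a, s]\<close> once \<open>s\<close> lies below the first point of \<open>L\<close> after \<open>a\<close> and \<open>g s\<close> is close to \<open>g a\<close>.\<close>
  have "variation g a 1 - e/2 < variation g a 1" using e by simp
  then obtain L where L: "L \<in> sorted_lists_in a 1" and near_sup: "variation g a 1 - e/2 < poly_sum g L"
    unfolding variation_def
    using less_cSUP_iff[OF _ rectifiable_path_bdd_above[OF g a(1) order_refl]]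
      Nil_in_sorted_lists_in by blast
  have "continuous (at a within {0..1}) g"
    using g a by (simp add: rectifiable_path_def path_def continuous_on_eq_continuous_within)
  then obtain d where d: "d > 0" "\<And>u. u \<in> {0..1} \<Longrightarrow> dist u a < d \<Longrightarrow> dist (g u) (g a) < e/2"
    using e unfolding continuous_within_eps_delta by (meson half_gt_zero)
  define B where "B = insert (a + d) (insert 1 {x \<in> set L. a < x})"
  have "finite B" "B \<noteq> {}" by (auto simp: B_def)
  moreover have "\<forall>x\<in>B. a < x" using d(1) a(2) by (auto simp: B_def)
  ultimately have "a < Min B" by simp
  moreover have "variation g a s \<le> e" if s: "a < s" "s < Min B" for s
  proof (rule variation_least)
    have sB: "s < x" if "x \<in> B" for x using s Min_le[OF \<open>finite B\<close> that] by linarith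
    then have s1: "s < 1" and "s < a + d" and gap: "\<forall>x\<in>set L. a < x \<longrightarrow> s < x"
      by (auto simp: B_def)
    then have "dist (g a) (g s) < e/2" using d(2)[of s] s a by (simp add: dist_commute dist_real_def)
    fix M assume M: "M \<in> sorted_lists_in a s"
    have "poly_sum g L + poly_sum g M \<le> variation g a 1 + dist (g a) (g s)"
      using poly_sum_merge_le_variation[OF g a(1) _ _ order_refl L M gap] s s1 by simp
    then show "poly_sum g M \<le> e" using near_sup \<open>dist (g a) (g s) < e/2\<close> by linarith
  qed
  ultimately show ?thesis unfolding eventually_at_right_field by blast
qed

lemma variation_scaleR:
  assumes "rectifiable_path g" "c \<ge> 0" "0 \<le> a" "b \<le> 1"
  shows "variation (\<lambda>s. c *\<^sub>R g s) a b = c * variation g a b"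
proof -
  have "c * Sup (poly_sum g ` sorted_lists_in a b) = Sup ((*) c ` poly_sum g ` sorted_lists_in a b)"
  proof (rule continuous_at_Sup_mono)
    show "mono ((*) c)" using assms(2) by (simp add: mono_def mult_left_mono)
    show "continuous (at_left (Sup (poly_sum g ` sorted_lists_in a b))) ((*) c)"
      by (rule continuous_mult_left[OF continuous_ident])
    show "poly_sum g ` sorted_lists_in a b \<noteq> {}" using Nil_in_sorted_lists_in by blast
  qed (rule rectifiable_path_bdd_above[OF assms(1,3,4)])
  then show ?thesis
    by (simp add: variation_def poly_sum_scaleR[OF assms(2)] image_image)
qed

section \<open>Arc length and quasihyperbolic length\<close>

lemma arc_len_mono:
  assumes "rectifiable_path g" "t \<le> u" shows "arc_len g t \<le> arc_len g u"
  unfolding arc_len_eq_variation by (rule variation_mono) (use assms in auto)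

lemma continuous_at_right_arc_len:
  assumes g: "rectifiable_path g" shows "continuous (at_right x) (arc_len g)"
proof (cases "0 \<le> x \<and> x < 1")
  case True
  then have x: "0 \<le> x" "x < 1" by auto
  have "\<forall>\<^sub>F t in at_right x. dist (arc_len g t) (arc_len g x) < e" if e: "e > 0" for e
  proof -
    have "\<forall>\<^sub>F t in at_right x. t < 1"
      unfolding eventually_at_right_field using x by blast
    with eventually_variation_at_right_le[OF g x half_gt_zero[OF e]] eventually_at_right_less[of x]
    show ?thesis
    proof eventually_elim
      case (elim t)
      then have "variation g 0 t \<le> variation g 0 x + variation g x t"
        "variation g 0 x \<le> variation g 0 t"
        using x by (auto intro: variation_split_le variation_mono g)
      then show ?case
        using elim x e by (simp add: arc_len_eq_variation dist_real_def)
    qed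
  qed
  then show ?thesis
    unfolding continuous_within tendsto_iff by blast
next
  case False
  then have "\<forall>\<^sub>F t in at_right x. arc_len g t = arc_len g x"
    unfolding eventually_at_right_field
    by (intro exI[of _ "if x < 0 then 0 else x + 1"]) (auto simp: arc_len_eq_variation)
  then show ?thesis
    unfolding continuous_within by (rule tendsto_eventually)
qed

lemma dist_le_arc_len_diff:
  assumes g: "rectifiable_path g" and "0 \<le> a" "a \<le> b" "b \<le> 1"
  shows "dist (g b) (g a) \<le> arc_len g b - arc_len g a"
proof -
  have "variation g 0 a \<le> variation g 0 b - dist (g b) (g a)"
  proof (rule variation_least)
    fix L assume "L \<in> sorted_lists_in 0 a"
    then have "L @ [a, b] \<in> sorted_lists_in 0 b"
      using assms by (auto simp: sorted_lists_in_def sorted_append)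
    then have "poly_sum g (L @ [a, b]) \<le> variation g 0 b"
      using variation_upper assms by blast
    then show "poly_sum g L \<le> variation g 0 b - dist (g b) (g a)"
      using poly_sum_append_Cons[of g L a "[b]"] poly_sum_le_snoc[of g L a] by simp
  qed
  then show ?thesis using assms by (simp add: arc_len_eq_variation)
qed

lemma emeasure_arc_len_Ioc:
  assumes "rectifiable_path g" "a \<le> b"
  shows "emeasure (interval_measure (arc_len g)) {a<..b} = ennreal (arc_len g b - arc_len g a)"
  by (rule emeasure_interval_measure_Ioc)
    (use assms arc_len_mono continuous_at_right_arc_len in auto)

lemma interval_measure_cmult:
  assumes mono: "\<And>x y. x \<le> y \<Longrightarrow> F x \<le> F y" and rc: "\<And>a. continuous (at_right a) F"
    and c: "c \<ge> 0"
  shows "interval_measure (\<lambda>x. c * F x) = scale_measure (ennreal c) (interval_measure F)"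
proof (rule measure_eqI_generator_eq[where E = "range (\<lambda>(a, b). {a<..b::real})"
      and \<Omega> = UNIV and A = "\<lambda>i. {- real i<..real i}"])
  show "Int_stable (range (\<lambda>(a, b). {a<..b::real}))"
    by (auto simp: Int_stable_def)
  have mono_c: "\<And>x y. x \<le> y \<Longrightarrow> c * F x \<le> c * F y" using mono c by (simp add: mult_left_mono)
  have rc_c: "\<And>a. continuous (at_right a) (\<lambda>x. c * F x)" using rc by (intro continuous_intros)
  show "emeasure (interval_measure (\<lambda>x. c * F x)) X
      = emeasure (scale_measure (ennreal c) (interval_measure F)) X"
    if "X \<in> range (\<lambda>(a, b). {a<..b})" for X
  proof -
    obtain a b where X: "X = {a<..b}" using \<open>X \<in> _\<close> by auto
    show ?thesis
    proof (cases "a \<le> b")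
      case True
      have "emeasure (interval_measure (\<lambda>x. c * F x)) X = ennreal (c * F b - c * F a)"
        unfolding X by (rule emeasure_interval_measure_Ioc[OF True mono_c rc_c])
      also have "\<dots> = ennreal c * ennreal (F b - F a)"
        using ennreal_mult'[OF c, of "F b - F a"] by (simp add: right_diff_distrib)
      also have "\<dots> = ennreal c * emeasure (interval_measure F) X"
        unfolding X using emeasure_interval_measure_Ioc[OF True mono rc] by simp
      finally show ?thesis by simp
    qed (simp add: X)
  qed
  have "sets (borel :: real measure) = sigma_sets UNIV (range (\<lambda>(a, b). {a<..b}))"
    by (subst borel_sigma_sets_Ioc) (rule sets_measure_of, simp)
  then show "sets (interval_measure (\<lambda>x. c * F x)) = sigma_sets UNIV (range (\<lambda>(a, b). {a<..b}))"
    "sets (scale_measure (ennreal c) (interval_measure F)) = sigma_sets UNIV (range (\<lambda>(a, b). {a<..b}))"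
    by simp_all
  show "(\<Union>i. {- real i<..real i}) = UNIV"
  proof safe
    fix x :: real
    obtain n :: nat where "\<bar>x\<bar> < n" using reals_Archimedean2 by blast
    then show "x \<in> (\<Union>i. {- real i<..real i})" by (intro UN_I[of n]) auto
  qed simp
  show "emeasure (interval_measure (\<lambda>x. c * F x)) {- real i<..real i} \<noteq> \<infinity>" for i
    by (subst emeasure_interval_measure_Ioc[OF _ mono_c rc_c]) auto
qed auto

lemma rectifiable_path_scaleR:
  assumes g: "rectifiable_path g" and c: "c \<ge> 0"
  shows "rectifiable_path (\<lambda>s. c *\<^sub>R g s)"
proof -
  have "path (\<lambda>s. c *\<^sub>R g s)"
    using g unfolding rectifiable_path_def path_def by (intro continuous_intros) auto
  moreover have "bdd_above ((\<lambda>ts. c * poly_sum g ts) ` sorted_lists_in 0 1)"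
    using rectifiable_path_bdd_above[OF g order_refl order_refl] c
    by (auto simp: bdd_above_def intro: mult_left_mono)
  ultimately show ?thesis
    by (simp add: rectifiable_path_def sorted_lists_in_def poly_sum_scaleR[OF c])
qed

lemma arc_len_scaleR:
  assumes "rectifiable_path g" "c \<ge> 0"
  shows "arc_len (\<lambda>s. c *\<^sub>R g s) = (\<lambda>t. c * arc_len g t)"
  by (rule ext) (simp add: arc_len_eq_variation variation_scaleR[OF assms])

lemma qh_integrand_measurable:
  assumes "path g"
  shows "(\<lambda>s. ennreal (1 / dG D (g s)) * indicator {0..1} s) \<in> borel_measurable borel"
proof -
  have "continuous_on {0..1} (\<lambda>s. dG D (g s))"
    using assms unfolding path_def dG_def by (intro continuous_intros)
  then have "(\<lambda>s. indicator {0..1} s *\<^sub>R dG D (g s)) \<in> borel_measurable borel"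
    by (intro borel_measurable_continuous_on_indicator) auto
  then have "(\<lambda>s. ennreal (1 / (indicator {0..1} s *\<^sub>R dG D (g s)))) \<in> borel_measurable borel"
    by measurable
  also have "(\<lambda>s. ennreal (1 / (indicator {0..1} s *\<^sub>R dG D (g s))))
      = (\<lambda>s. ennreal (1 / dG D (g s)) * indicator {0..1} s)"
    by (auto split: split_indicator)
  finally show ?thesis .
qed

lemma qh_length_cong:
  assumes "\<And>s. s \<in> {0..1} \<Longrightarrow> dG D (g s) = dG D' (g s)"
  shows "qh_length D g = qh_length D' g"
  unfolding qh_length_def by (rule nn_integral_cong) (auto simp: assms split: split_indicator)

lemma qh_length_scaleR:
  assumes g: "rectifiable_path g" and c: "c > 0"
    and dG_scale: "\<And>z. dG D (c *\<^sub>R z) = c * dG D z"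
  shows "qh_length D (\<lambda>s. c *\<^sub>R g s) = qh_length D g"
proof -
  let ?f = "\<lambda>s. ennreal (1 / dG D (g s)) * indicator {0..1} s"
  let ?\<mu> = "interval_measure (arc_len g)"
  have f: "?f \<in> borel_measurable ?\<mu>"
    using qh_integrand_measurable[of g D] g measurable_cong_sets[OF sets_interval_measure refl]
    by (simp add: rectifiable_path_def)
  have "interval_measure (arc_len (\<lambda>s. c *\<^sub>R g s)) = scale_measure (ennreal c) ?\<mu>"
    unfolding arc_len_scaleR[OF g less_imp_le[OF c]]
    by (rule interval_measure_cmult) (use g arc_len_mono continuous_at_right_arc_len c in auto)
  moreover have "ennreal (1 / dG D (c *\<^sub>R g s)) * indicator {0..1} s = ennreal (1/c) * ?f s" for s
  proof -
    have "ennreal (1 / dG D (c *\<^sub>R g s)) = ennreal ((1/c) * (1 / dG D (g s)))"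
      by (simp add: dG_scale)
    also have "\<dots> = ennreal (1/c) * ennreal (1 / dG D (g s))"
      by (rule ennreal_mult) (use c in \<open>auto simp: dG_def infdist_nonneg\<close>)
    finally show ?thesis by (simp add: mult.assoc)
  qed
  ultimately have "qh_length D (\<lambda>s. c *\<^sub>R g s) = ennreal c * (ennreal (1/c) * \<integral>\<^sup>+ s. ?f s \<partial>?\<mu>)"
    unfolding qh_length_def using f
    by (simp add: nn_integral_scale_measure nn_integral_cmult mult.left_commute)
  also have "\<dots> = qh_length D g"
    using c by (simp add: qh_length_def mult.assoc[symmetric] flip: ennreal_mult)
  finally show ?thesis .
qed

section \<open>Dilation invariance\<close>

definition dilation_invariant :: "'a::real_vector set \<Rightarrow> bool" where
  "dilation_invariant S \<longleftrightarrow> (\<forall>c>0. \<forall>z\<in>S. c *\<^sub>R z \<in> S)"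

lemma dilation_invariant_image_eq:
  assumes "dilation_invariant S" "c > 0"
  shows "(*\<^sub>R) c ` S = S"
proof
  show "(*\<^sub>R) c ` S \<subseteq> S" using assms by (auto simp: dilation_invariant_def)
  show "S \<subseteq> (*\<^sub>R) c ` S"
  proof
    fix z assume "z \<in> S"
    then have "(1/c) *\<^sub>R z \<in> S" using assms by (simp add: dilation_invariant_def)
    moreover have "z = c *\<^sub>R ((1/c) *\<^sub>R z)" using assms(2) by simp
    ultimately show "z \<in> (*\<^sub>R) c ` S" by blast
  qed
qed

lemma dilation_invariant_frontier:
  fixes S :: "'a::euclidean_space set"
  assumes "dilation_invariant S"
  shows "dilation_invariant (frontier S)"
  unfolding dilation_invariant_def
proof (intro allI impI ballI)
  fix c :: real and a assume c: "c > 0" and a: "a \<in> frontier S"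
  have lin: "linear ((*\<^sub>R) c :: 'a \<Rightarrow> 'a)" and inj: "inj ((*\<^sub>R) c :: 'a \<Rightarrow> 'a)"
    using c by (auto simp: bounded_linear.linear[OF bounded_linear_scaleR_right] intro: injI)
  have "frontier S = (*\<^sub>R) c ` frontier S"
    using closure_injective_linear_image[OF lin inj, of S] interior_injective_linear_image[OF lin inj, of S]
    by (simp add: frontier_def image_set_diff[OF inj] dilation_invariant_image_eq[OF assms c])
  then show "c *\<^sub>R a \<in> frontier S" using a by blast
qed

lemma infdist_scaleR_le:
  fixes z :: "'a::real_normed_vector"
  assumes "dilation_invariant F" "c > 0"
  shows "infdist (c *\<^sub>R z) F \<le> c * infdist z F"
proof (cases "F = {}")
  case False
  have "infdist (c *\<^sub>R z) F / c \<le> infdist z F"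
    unfolding infdist_notempty[OF False, of z]
  proof (rule cINF_greatest[OF False])
    fix a assume "a \<in> F"
    then have "infdist (c *\<^sub>R z) F \<le> dist (c *\<^sub>R z) (c *\<^sub>R a)"
      using assms by (intro infdist_le) (auto simp: dilation_invariant_def)
    also have "\<dots> = norm (c *\<^sub>R (z - a))" by (simp add: dist_norm scaleR_diff_right)
    also have "\<dots> = c * dist z a" using assms(2) by (simp add: dist_norm)
    finally show "infdist (c *\<^sub>R z) F / c \<le> dist z a"
      using assms(2) by (simp add: field_simps)
  qed
  then show ?thesis using assms(2) by (simp add: field_simps)
qed (simp add: infdist_def)

lemma infdist_scaleR:
  fixes z :: "'a::real_normed_vector"
  assumes "dilation_invariant F" "c > 0"
  shows "infdist (c *\<^sub>R z) F = c * infdist z F"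
proof (rule antisym)
  have "infdist ((1/c) *\<^sub>R (c *\<^sub>R z)) F \<le> (1/c) * infdist (c *\<^sub>R z) F"
    using assms by (intro infdist_scaleR_le) auto
  then show "c * infdist z F \<le> infdist (c *\<^sub>R z) F"
    using assms(2) by (simp add: field_simps)
qed (rule infdist_scaleR_le[OF assms])

lemma dG_scaleR:
  assumes "dilation_invariant D" "c > 0"
  shows "dG D (c *\<^sub>R z) = c * dG D z"
  unfolding dG_def using assms by (intro infdist_scaleR dilation_invariant_frontier)

lemma j_dist_nonneg: "0 \<le> j_dist D x y"
  by (simp add: j_dist_def dG_def infdist_nonneg)

lemma j_dist_scaleR:
  assumes "dilation_invariant D" "c > 0"
  shows "j_dist D (c *\<^sub>R x) (c *\<^sub>R y) = j_dist D x y"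
proof -
  have "dist (c *\<^sub>R x) (c *\<^sub>R y) = c * dist x y"
    using assms(2) by (simp add: dist_norm flip: scaleR_diff_right)
  moreover have "min (c * dG D x) (c * dG D y) = c * min (dG D x) (dG D y)"
    using assms(2) by (simp add: min_def)
  ultimately show ?thesis
    using assms(2) by (simp add: j_dist_def dG_scaleR[OF assms])
qed

lemma qh_dist_scaleR_le:
  assumes D: "dilation_invariant D" and c: "c > 0"
  shows "qh_dist D (c *\<^sub>R x) (c *\<^sub>R y) \<le> qh_dist D x y"
  unfolding qh_dist_def
proof (rule Inf_mono)
  fix b assume "b \<in> {qh_length D g |g. rectifiable_path g \<and> path_image g \<subseteq> D
      \<and> pathstart g = x \<and> pathfinish g = y}"
  then obtain g where g: "rectifiable_path g" "path_image g \<subseteq> D" "pathstart g = x" "pathfinish g = y"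
    and b: "b = qh_length D g" by blast
  have "path_image (\<lambda>s. c *\<^sub>R g s) \<subseteq> D"
    using g(2) D c by (auto simp: path_image_def dilation_invariant_def)
  moreover have "qh_length D (\<lambda>s. c *\<^sub>R g s) = b"
    unfolding b by (rule qh_length_scaleR[OF g(1) c dG_scaleR[OF D c]])
  ultimately show "\<exists>a\<in>{qh_length D g |g. rectifiable_path g \<and> path_image g \<subseteq> D
      \<and> pathstart g = c *\<^sub>R x \<and> pathfinish g = c *\<^sub>R y}. a \<le> b"
    using g rectifiable_path_scaleR[OF g(1) less_imp_le[OF c]]
    by (intro bexI[of _ b] CollectI exI[of _ "\<lambda>s. c *\<^sub>R g s"]) (auto simp: pathstart_def pathfinish_def)
qed

lemma qh_dist_scaleR:
  assumes "dilation_invariant D" "c > 0"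
  shows "qh_dist D (c *\<^sub>R x) (c *\<^sub>R y) = qh_dist D x y"
proof (rule antisym[OF qh_dist_scaleR_le[OF assms]])
  show "qh_dist D x y \<le> qh_dist D (c *\<^sub>R x) (c *\<^sub>R y)"
    using qh_dist_scaleR_le[OF assms(1), of "1/c" "c *\<^sub>R x" "c *\<^sub>R y"] assms(2) by simp
qed

lemma exists_dilation_into_ball:
  fixes x y :: "'a::real_normed_vector"
  assumes "r > 0" "x \<noteq> 0"
  obtains t where "t > 0" "2^N * norm (t *\<^sub>R x) < r" "norm (t *\<^sub>R y) < r"
proof
  define t where "t = r / (2 * 2^N * (norm x + norm y))"
  have pos: "norm x + norm y > 0" using assms(2) by (simp add: add_pos_nonneg)
  then show "t > 0" using assms(1) by (simp add: t_def)
  have sum: "2^N * (t * (norm x + norm y)) = r/2" using pos by (simp add: t_def)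
  have "2^N * (t * norm x) \<le> 2^N * (t * (norm x + norm y))"
    "2^N * (t * norm y) \<le> 2^N * (t * (norm x + norm y))"
    using \<open>t > 0\<close> by (simp_all add: mult_left_mono)
  moreover have "1 * (t * norm y) \<le> 2^N * (t * norm y)"
    using \<open>t > 0\<close> by (intro mult_right_mono) simp_all
  moreover have nx: "norm (t *\<^sub>R x) = t * norm x" and ny: "norm (t *\<^sub>R y) = t * norm y"
    using \<open>t > 0\<close> by simp_all
  ultimately show "2^N * norm (t *\<^sub>R x) < r" "norm (t *\<^sub>R y) < r"
    unfolding nx ny using sum assms(1) by linarith+
qed

section \<open>Domains that agree with a sector near its vertex\<close>

lemma dilation_invariant_sector: "dilation_invariant (sector \<alpha>)"
  unfolding dilation_invariant_def
proof (intro allI impI ballI)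
  fix c :: real and z assume "c > 0" "z \<in> sector \<alpha>"
  then obtain \<rho> t where "\<rho> > 0" "t \<in> {0<..<\<alpha>}" "z = complex_of_real \<rho> * cis t"
    unfolding sector_def by blast
  then show "c *\<^sub>R z \<in> sector \<alpha>"
    unfolding sector_def using \<open>c > 0\<close>
    by (intro CollectI exI[of _ "c * \<rho>"] conjI bexI[of _ t]) (auto simp: scaleR_conv_of_real)
qed

lemma zero_notin_sector: "0 \<notin> sector \<alpha>"
  by (auto simp: sector_def)

lemma zero_in_closure_sector_Int_ball:
  assumes "\<alpha> > 0" "r > 0"
  shows "0 \<in> closure (sector \<alpha> \<inter> ball 0 r)"
  unfolding closure_approachable
proof (intro allI impI)
  fix e :: real assume "e > 0"
  define m where "m = min (e/2) (r/2)"
  have m: "m > 0" "m < e" "m < r" using \<open>e > 0\<close> assms by (auto simp: m_def)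
  have "complex_of_real m * cis (\<alpha>/2) \<in> sector \<alpha>"
    unfolding sector_def using m assms by fastforce
  moreover have "norm (complex_of_real m * cis (\<alpha>/2)) = m" using m by (simp add: norm_mult)
  ultimately show "\<exists>y\<in>sector \<alpha> \<inter> ball 0 r. dist y 0 < e"
    using m by (intro bexI[of _ "complex_of_real m * cis (\<alpha>/2)"]) auto
qed

lemma frontier_Int_open_eq:
  assumes "open U" "X \<inter> U = Y \<inter> U"
  shows "frontier X \<inter> U = frontier Y \<inter> U"
proof -
  have "frontier Z \<inter> U = (closure (Z \<inter> U) \<inter> U) - interior (Z \<inter> U)" for Z
  proof -
    have "closure Z \<inter> U = closure (Z \<inter> U) \<inter> U"
      using open_Int_closure_subset[OF assms(1), of Z] closure_mono[of "Z \<inter> U" Z]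
      by (auto simp: Int_commute)
    moreover have "interior Z \<inter> U = interior (Z \<inter> U)"
      using assms(1) by (simp add: interior_Int interior_open)
    ultimately show ?thesis unfolding frontier_def by blast
  qed
  then show ?thesis by (simp only: assms(2))
qed

lemma infdist_Int_ball:
  assumes "a \<in> A" "dist z a < r/2"
  shows "infdist z (A \<inter> ball a r) = infdist z A"
proof (rule antisym)
  have "r > 0" using assms(2) zero_le_dist[of z a] by linarith
  show "infdist z A \<le> infdist z (A \<inter> ball a r)"
    using assms \<open>r > 0\<close> by (intro infdist_mono) auto
  have "infdist z (A \<inter> ball a r) \<le> dist z b" if "b \<in> A" for b
  proof (cases "b \<in> ball a r")
    case False
    then have "dist z a \<le> dist z b"
      using assms(2) dist_triangle[of a b z] by (simp add: dist_commute)
    moreover have "infdist z (A \<inter> ball a r) \<le> dist z a"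
      using assms \<open>r > 0\<close> by (intro infdist_le) auto
    ultimately show ?thesis by linarith
  qed (use that in \<open>simp add: infdist_le\<close>)
  then show "infdist z (A \<inter> ball a r) \<le> infdist z A"
    unfolding infdist_notempty[of A, OF ex_in_conv[THEN iffD1, OF exI, OF assms(1)]]
    using assms(1) by (intro cINF_greatest) auto
qed

lemma infdist_eq_if_Int_ball_eq:
  assumes "a \<in> A" "a \<in> B" "A \<inter> ball a r = B \<inter> ball a r" "dist z a < r/2"
  shows "infdist z A = infdist z B"
  using infdist_Int_ball[OF assms(1,4)] infdist_Int_ball[OF assms(2,4)] assms(3) by simp

lemma zero_in_frontier_if_local_sector:
  assumes "\<alpha> > 0" "r > 0" "G \<inter> ball 0 r = sector \<alpha> \<inter> ball 0 r"
  shows "0 \<in> frontier G"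
proof -
  have "0 \<in> closure G"
    using zero_in_closure_sector_Int_ball[OF assms(1,2)] closure_mono[of "G \<inter> ball 0 r" G] assms(3)
    by auto
  moreover have "0 \<notin> G"
  proof
    assume "0 \<in> G"
    then have "0 \<in> sector \<alpha> \<inter> ball 0 r" using assms(2,3) by (metis IntI centre_in_ball)
    then show False using zero_notin_sector by blast
  qed
  ultimately show ?thesis using interior_subset[of G] by (auto simp: frontier_def)
qed

lemma dG_eq_if_local_sector:
  assumes "\<alpha> > 0" "r > 0" "G \<inter> ball 0 r = sector \<alpha> \<inter> ball 0 r" "norm z < r/2"
  shows "dG G z = dG (sector \<alpha>) z"
  unfolding dG_def
proof (rule infdist_eq_if_Int_ball_eq)
  show "0 \<in> frontier G" by (rule zero_in_frontier_if_local_sector[OF assms(1-3)])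
  show "0 \<in> frontier (sector \<alpha>)" by (rule zero_in_frontier_if_local_sector[OF assms(1,2) refl])
  show "frontier G \<inter> ball 0 r = frontier (sector \<alpha>) \<inter> ball 0 r"
    by (rule frontier_Int_open_eq[OF open_ball assms(3)])
  show "dist z 0 < r/2" using assms(4) by simp
qed

section \<open>Leaving a neighbourhood of a boundary point\<close>

definition exit_time :: "(real \<Rightarrow> 'a::real_normed_vector) \<Rightarrow> real \<Rightarrow> real" where
  "exit_time g R = Inf {s \<in> {0..1}. R \<le> norm (g s)}"

context
  fixes g :: "real \<Rightarrow> 'a::real_normed_vector" and R :: real
  assumes cont: "continuous_on {0..1} g"
    and reach: "\<exists>s\<in>{0..1}. R \<le> norm (g s)"
begin

lemma exit_time_mem: "exit_time g R \<in> {0..1}"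
  and norm_exit_time_ge: "R \<le> norm (g (exit_time g R))"
proof -
  have "closed {s \<in> {0..1}. R \<le> norm (g s)}"
    by (intro continuous_on_closed_Collect_le continuous_intros cont)
  then have "exit_time g R \<in> {s \<in> {0..1}. R \<le> norm (g s)}"
    unfolding exit_time_def using reach by (intro closed_contains_Inf bdd_belowI[of _ 0]) auto
  then show "exit_time g R \<in> {0..1}" "R \<le> norm (g (exit_time g R))" by auto
qed

lemma norm_less_before_exit_time:
  assumes "0 \<le> s" "s < exit_time g R" shows "norm (g s) < R"
proof (rule ccontr)
  assume "\<not> norm (g s) < R"
  then have "exit_time g R \<le> s"
    unfolding exit_time_def
    using assms exit_time_mem by (intro cInf_lower bdd_belowI[of _ 0]) auto
  then show False using assms(2) by simp
qed

lemma norm_le_until_exit_time: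
  assumes "norm (g 0) \<le> R" "s \<in> {0..exit_time g R}" shows "norm (g s) \<le> R"
proof (cases "exit_time g R = 0")
  case False
  have "{0..<exit_time g R} \<subseteq> {s \<in> {0..1}. norm (g s) \<le> R}"
    using norm_less_before_exit_time exit_time_mem by (auto intro: less_imp_le)
  then have "closure {0..<exit_time g R} \<subseteq> {s \<in> {0..1}. norm (g s) \<le> R}"
    by (intro closure_minimal continuous_on_closed_Collect_le continuous_intros cont) auto
  then show ?thesis using assms(2) False exit_time_mem by auto
qed (use assms in auto)

end

lemma exit_time_mono:
  assumes "continuous_on {0..1} g" "R \<le> R'" "s \<in> {0..1}" "R' \<le> norm (g s)"
  shows "exit_time g R \<le> exit_time g R'"
  unfolding exit_time_def
  using assms by (intro cInf_superset_mono bdd_belowI[of _ 0]) auto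

lemma nn_integral_Ioc_chain_ge:
  fixes T :: "nat \<Rightarrow> real" and c :: ennreal
  assumes f: "f \<in> borel_measurable M" and M: "sets M = sets borel"
    and T: "\<And>k. k < n \<Longrightarrow> T k \<le> T (Suc k)"
    and piece: "\<And>k. k < n \<Longrightarrow> c \<le> \<integral>\<^sup>+ s. f s * indicator {T k<..T (Suc k)} s \<partial>M"
  shows "of_nat n * c \<le> \<integral>\<^sup>+ s. f s * indicator {T 0<..T n} s \<partial>M"
  using T piece
proof (induction n)
  case (Suc n)
  have "T 0 \<le> T m" if "m \<le> n" for m
    using that Suc.prems(1) by (induction m) (auto intro: order_trans)
  then have "T 0 \<le> T n" by simp
  then have "indicator {T 0<..T (Suc n)} s = (indicator {T 0<..T n} s + indicator {T n<..T (Suc n)} s :: ennreal)"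
    for s using Suc.prems(1)[of n] by (auto simp: indicator_def)
  then have "\<integral>\<^sup>+ s. f s * indicator {T 0<..T (Suc n)} s \<partial>M
      = (\<integral>\<^sup>+ s. f s * indicator {T 0<..T n} s \<partial>M) + (\<integral>\<^sup>+ s. f s * indicator {T n<..T (Suc n)} s \<partial>M)"
    using f M by (simp add: distrib_left nn_integral_add)
  moreover have "of_nat n * c + c
      \<le> (\<integral>\<^sup>+ s. f s * indicator {T 0<..T n} s \<partial>M) + (\<integral>\<^sup>+ s. f s * indicator {T n<..T (Suc n)} s \<partial>M)"
    using Suc by (intro add_mono) auto
  ultimately show ?case by (simp add: distrib_right add.commute)
qed simp

lemma dG_pos:
  assumes "open D" "frontier D \<noteq> {}" "z \<in> D"
  shows "0 < dG D z"
  unfolding dG_def using assms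
  by (intro infdist_pos_not_in_closed) (auto simp: frontier_def interior_open)

lemma qh_integral_Ioc_ge:
  assumes g: "rectifiable_path g" "path_image g \<subseteq> D" and D: "open D" "0 \<in> frontier D"
    and ab: "0 \<le> a" "a \<le> b" "b \<le> 1" and R: "R > 0"
    and bound: "\<And>s. s \<in> {a<..b} \<Longrightarrow> norm (g s) \<le> R"
  shows "ennreal (dist (g b) (g a) / R)
    \<le> \<integral>\<^sup>+ s. ennreal (1 / dG D (g s)) * indicator {0..1} s * indicator {a<..b} s \<partial>interval_measure (arc_len g)"
proof -
  let ?\<mu> = "interval_measure (arc_len g)"
  have "ennreal (1/R) * indicator {a<..b} s
      \<le> ennreal (1 / dG D (g s)) * indicator {0..1} s * indicator {a<..b} s" for s
  proof (cases "s \<in> {a<..b}")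
    case True
    then have "s \<in> {0..1}" using ab by auto
    then have "0 < dG D (g s)" using g D by (intro dG_pos) (auto simp: path_image_def)
    moreover have "dG D (g s) \<le> R"
      using infdist_le[OF D(2), of "g s"] bound[OF True] by (simp add: dG_def)
    ultimately show ?thesis
      using True \<open>s \<in> {0..1}\<close> by (auto intro!: ennreal_leI frac_le)
  qed simp
  then have "ennreal (1/R) * emeasure ?\<mu> {a<..b} \<le> \<integral>\<^sup>+ s. ennreal (1 / dG D (g s)) * indicator {0..1} s * indicator {a<..b} s \<partial>?\<mu>"
    by (subst nn_integral_cmult_indicator[symmetric]) (auto intro: nn_integral_mono)
  moreover have "ennreal (dist (g b) (g a) / R) \<le> ennreal (1/R) * emeasure ?\<mu> {a<..b}"
  proof -
    have "dist (g b) (g a) / R \<le> (1/R) * (arc_len g b - arc_len g a)"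
      using dist_le_arc_len_diff[OF g(1) ab] R by (simp add: divide_right_mono)
    then have "ennreal (dist (g b) (g a) / R) \<le> ennreal ((1/R) * (arc_len g b - arc_len g a))"
      by (rule ennreal_leI)
    also have "\<dots> = ennreal (1/R) * emeasure ?\<mu> {a<..b}"
      unfolding emeasure_arc_len_Ioc[OF g(1) ab(2)] by (rule ennreal_mult') (use R in simp)
    finally show ?thesis .
  qed
  ultimately show ?thesis by (rule order.trans[rotated])
qed

lemma qh_integral_between_exit_times_ge:
  assumes g: "rectifiable_path g" "path_image g \<subseteq> D" and D: "open D" "0 \<in> frontier D"
    and R: "R > 0" "norm (g 0) \<le> R" and s1: "s1 \<in> {0..1}" "2 * R \<le> norm (g s1)"
  shows "ennreal (1/2) \<le> \<integral>\<^sup>+ s. ennreal (1 / dG D (g s)) * indicator {0..1} s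
      * indicator {exit_time g R<..exit_time g (2 * R)} s \<partial>interval_measure (arc_len g)"
proof -
  \<comment> \<open>Between the two exit times \<open>g\<close> moves by at least \<open>R\<close> inside \<open>cball 0 (2 * R)\<close>, where
    \<open>dG D \<le> 2 * R\<close> because \<open>0\<close> is a boundary point.\<close>
  let ?a = "exit_time g R" and ?b = "exit_time g (2 * R)"
  have cont: "continuous_on {0..1} g" using g(1) by (simp add: rectifiable_path_def path_def)
  have "R \<le> norm (g s1)" using s1(2) R(1) by linarith
  then have reach: "\<exists>s\<in>{0..1}. R \<le> norm (g s)" "\<exists>s\<in>{0..1}. 2 * R \<le> norm (g s)"
    using s1 by auto
  have ab: "?a \<le> ?b" using R(1) s1 by (intro exit_time_mono[OF cont]) auto
  have a: "?a \<in> {0..1}" "norm (g ?a) \<le> R"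
    using exit_time_mem[OF cont reach(1)] norm_le_until_exit_time[OF cont reach(1) R(2)] by auto
  have b: "?b \<in> {0..1}" "2 * R \<le> norm (g ?b)" "\<And>s. s \<in> {0..?b} \<Longrightarrow> norm (g s) \<le> 2 * R"
    using exit_time_mem[OF cont reach(2)] norm_exit_time_ge[OF cont reach(2)]
      norm_le_until_exit_time[OF cont reach(2)] R by auto
  have "R \<le> dist (g ?b) (g ?a)"
    using a(2) b(2) norm_triangle_ineq2[of "g ?b" "g ?a"] unfolding dist_norm by linarith
  then have "ennreal (1/2) \<le> ennreal (dist (g ?b) (g ?a) / (2 * R))"
    using R(1) by (intro ennreal_leI) (simp add: field_simps)
  also have "\<dots> \<le> \<integral>\<^sup>+ s. ennreal (1 / dG D (g s)) * indicator {0..1} s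
      * indicator {?a<..?b} s \<partial>interval_measure (arc_len g)"
    using a b ab R(1) by (intro qh_integral_Ioc_ge[OF g D]) auto
  finally show ?thesis .
qed

lemma qh_length_ge_exit:
  assumes g: "rectifiable_path g" "path_image g \<subseteq> D" and D: "open D" "0 \<in> frontier D"
    and \<rho>: "\<rho> > 0" "norm (g 0) \<le> \<rho>" and s1: "s1 \<in> {0..1}" "2^N * \<rho> \<le> norm (g s1)"
  shows "ennreal (real N / 2) \<le> qh_length D g"
proof -
  let ?f = "\<lambda>s. ennreal (1 / dG D (g s)) * indicator {0..1} s"
  let ?\<mu> = "interval_measure (arc_len g)"
  define T where "T k = exit_time g (2^k * \<rho>)" for k
  have cont: "continuous_on {0..1} g" using g(1) by (simp add: rectifiable_path_def path_def)
  have reach: "2^k * \<rho> \<le> norm (g s1)" if "k \<le> N" for k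
  proof -
    have "(2::real)^k \<le> 2^N" using that by (simp add: power_increasing)
    then have "2^k * \<rho> \<le> 2^N * \<rho>" by (rule mult_right_mono) (use \<rho>(1) in simp)
    then show ?thesis using s1(2) by linarith
  qed
  have start: "norm (g 0) \<le> 2^k * \<rho>" for k
  proof -
    have "1 * \<rho> \<le> 2^k * \<rho>" by (rule mult_right_mono) (use \<rho>(1) in simp_all)
    then show ?thesis using \<rho>(2) by simp
  qed
  have T_mono: "T k \<le> T (Suc k)" if "k < N" for k
    unfolding T_def using reach[of "Suc k"] that \<rho>(1) s1(1)
    by (intro exit_time_mono[OF cont]) auto
  have "ennreal (1/2) \<le> \<integral>\<^sup>+ s. ?f s * indicator {T k<..T (Suc k)} s \<partial>?\<mu>" if "k < N" for k
  proof -
    have double: "2^Suc k * \<rho> = 2 * (2^k * \<rho>)" by simp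
    show ?thesis
      unfolding T_def double
      by (rule qh_integral_between_exit_times_ge[OF g D _ start s1(1)])
        (use \<rho>(1) reach[of "Suc k"] that in \<open>simp_all add: mult.assoc\<close>)
  qed
  then have "of_nat N * ennreal (1/2) \<le> \<integral>\<^sup>+ s. ?f s * indicator {T 0<..T N} s \<partial>?\<mu>"
    using qh_integrand_measurable[of g D] g(1) measurable_cong_sets[OF sets_interval_measure refl]
    by (intro nn_integral_Ioc_chain_ge T_mono) (auto simp: rectifiable_path_def)
  also have "\<dots> \<le> qh_length D g"
    unfolding qh_length_def by (intro nn_integral_mono) (simp add: indicator_def)
  finally have "of_nat N * ennreal (1/2) \<le> qh_length D g" .
  moreover have "of_nat N * ennreal (1/2) = ennreal (real N / 2)"
    unfolding ennreal_of_nat_eq_real_of_nat by (subst ennreal_mult[symmetric]) auto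
  ultimately show ?thesis by metis
qed

lemma path_image_subset_ball_if_qh_length_less:
  assumes g: "rectifiable_path g" "path_image g \<subseteq> D" and D: "open D" "0 \<in> frontier D"
    and start: "0 < norm (g 0)" "2^N * norm (g 0) \<le> R"
    and short: "qh_length D g < ennreal (real N / 2)"
  shows "path_image g \<subseteq> ball 0 R"
proof (rule ccontr)
  assume "\<not> ?thesis"
  then obtain s1 where "s1 \<in> {0..1}" "g s1 \<notin> ball 0 R" unfolding path_image_def by blast
  then have "ennreal (real N / 2) \<le> qh_length D g"
    using start by (intro qh_length_ge_exit[OF g D]) auto
  then show False using short by simp
qed

lemma exists_dilation_near_vertex:
  assumes \<alpha>: "\<alpha> > 0" and r: "r > 0" and loc: "G \<inter> ball 0 r = sector \<alpha> \<inter> ball 0 r"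
    and x: "x \<in> sector \<alpha>" and y: "y \<in> sector \<alpha>"
  obtains t where "t > 0" "2^N * norm (t *\<^sub>R x) < r/2" "t *\<^sub>R x \<in> G" "t *\<^sub>R y \<in> G"
    "j_dist G (t *\<^sub>R x) (t *\<^sub>R y) = j_dist (sector \<alpha>) x y"
proof -
  have "x \<noteq> 0" using x zero_notin_sector by blast
  then obtain t where t: "t > 0" "2^N * norm (t *\<^sub>R x) < r/2" "norm (t *\<^sub>R y) < r/2"
    using exists_dilation_into_ball[of "r/2" x N y] r by auto
  have "1 * norm (t *\<^sub>R x) \<le> 2^N * norm (t *\<^sub>R x)" by (intro mult_right_mono) simp_all
  then have tx: "norm (t *\<^sub>R x) < r/2" using t(2) by linarith
  have "t *\<^sub>R x \<in> sector \<alpha>" "t *\<^sub>R y \<in> sector \<alpha>"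
    using x y dilation_invariant_sector t(1) by (auto simp: dilation_invariant_def)
  moreover have "norm (t *\<^sub>R x) < r" "norm (t *\<^sub>R y) < r" using tx t(3) r by linarith+
  ultimately have "t *\<^sub>R x \<in> sector \<alpha> \<inter> ball 0 r" "t *\<^sub>R y \<in> sector \<alpha> \<inter> ball 0 r" by simp_all
  then have "t *\<^sub>R x \<in> G" "t *\<^sub>R y \<in> G" by (metis IntD1 loc)+
  moreover have "j_dist G (t *\<^sub>R x) (t *\<^sub>R y) = j_dist (sector \<alpha>) (t *\<^sub>R x) (t *\<^sub>R y)"
    using dG_eq_if_local_sector[OF \<alpha> r loc] tx t(3) by (simp add: j_dist_def)
  ultimately show ?thesis
    using that t(1,2) j_dist_scaleR[OF dilation_invariant_sector t(1)] by simp
qed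

lemma qh_dist_sector_le_if_path_near_vertex:
  assumes \<alpha>: "\<alpha> > 0" and r: "r > 0" and loc: "G \<inter> ball 0 r = sector \<alpha> \<inter> ball 0 r"
    and g: "rectifiable_path g" "path_image g \<subseteq> G" "pathstart g = t *\<^sub>R x" "pathfinish g = t *\<^sub>R y"
    and t: "t > 0" and near: "path_image g \<subseteq> ball 0 (r/2)"
  shows "qh_dist (sector \<alpha>) x y \<le> qh_length G g"
proof -
  have "qh_dist (sector \<alpha>) x y = qh_dist (sector \<alpha>) (t *\<^sub>R x) (t *\<^sub>R y)"
    by (rule qh_dist_scaleR[OF dilation_invariant_sector t, symmetric])
  also have "\<dots> \<le> qh_length (sector \<alpha>) g"
  proof -
    have "path_image g \<subseteq> G \<inter> ball 0 r" using g(2) near subset_ball[of "r/2" r 0] r by auto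
    then have "path_image g \<subseteq> sector \<alpha>" using loc by blast
    then show ?thesis using g unfolding qh_dist_def by (intro Inf_lower) blast
  qed
  also have "\<dots> = qh_length G g"
  proof (rule qh_length_cong)
    fix s :: real assume "s \<in> {0..1}"
    then have "g s \<in> ball 0 (r/2)" using near unfolding path_image_def by blast
    then show "dG (sector \<alpha>) (g s) = dG G (g s)"
      using dG_eq_if_local_sector[OF \<alpha> r loc] by simp
  qed
  finally show ?thesis .
qed

lemma ennreal_le_if_forall_less:
  assumes "0 \<le> a" and less: "\<And>M. a < M \<Longrightarrow> x \<le> ennreal M"
  shows "x \<le> ennreal a"
proof (rule ennreal_le_epsilon)
  fix e :: real assume "0 < e"
  then have "x \<le> ennreal (a + e)" by (intro less) simp
  also have "\<dots> = ennreal a + ennreal e" using assms(1) \<open>0 < e\<close> by (intro ennreal_plus) auto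
  finally show "x \<le> ennreal a + ennreal e" .
qed

lemma qh_dist_sector_le_if_local:
  assumes \<alpha>: "\<alpha> > 0" and G: "open G" and r: "r > 0" and loc: "G \<inter> ball 0 r = sector \<alpha> \<inter> ball 0 r"
    and A: "A \<ge> 0" and HA: "\<forall>x\<in>G. \<forall>y\<in>G. qh_dist G x y \<le> ennreal (A * j_dist G x y)"
    and x: "x \<in> sector \<alpha>" and y: "y \<in> sector \<alpha>"
  shows "qh_dist (sector \<alpha>) x y \<le> ennreal (A * j_dist (sector \<alpha>) x y)"
proof (rule ennreal_le_if_forall_less)
  let ?S = "sector \<alpha>"
  show "0 \<le> A * j_dist ?S x y" using A j_dist_nonneg by simp
  fix M assume M: "A * j_dist ?S x y < M"
  obtain N :: nat where "2 * M \<le> real N" using real_arch_simple by blast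
  then have N: "M \<le> real N / 2" by simp
  \<comment> \<open>Shrink \<open>x, y\<close> so far towards the vertex that a path from \<open>t x\<close> leaving \<open>ball 0 (r/2)\<close>
    must cross \<open>N\<close> dyadic annuli around the boundary point \<open>0\<close>.\<close>
  obtain t where t: "t > 0" "2^N * norm (t *\<^sub>R x) < r/2" and inG: "t *\<^sub>R x \<in> G" "t *\<^sub>R y \<in> G"
    and j_eq: "j_dist G (t *\<^sub>R x) (t *\<^sub>R y) = j_dist ?S x y"
    using exists_dilation_near_vertex[OF \<alpha> r loc x y] by blast
  have "qh_dist G (t *\<^sub>R x) (t *\<^sub>R y) \<le> ennreal (A * j_dist ?S x y)"
    using HA[rule_format, OF inG] j_eq by simp
  also have "\<dots> < ennreal M"
    using M mult_nonneg_nonneg[OF A j_dist_nonneg[of ?S x y]] by (intro ennreal_lessI) auto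
  finally obtain g where g: "rectifiable_path g" "path_image g \<subseteq> G"
      "pathstart g = t *\<^sub>R x" "pathfinish g = t *\<^sub>R y" and gM: "qh_length G g < ennreal M"
    unfolding qh_dist_def Inf_less_iff by blast
  have "qh_length G g < ennreal (real N / 2)"
    using gM ennreal_leI[OF N] by (rule order.strict_trans2)
  moreover have "x \<noteq> 0" using x zero_notin_sector by blast
  ultimately have "path_image g \<subseteq> ball 0 (r/2)"
    using g(3) t
    by (intro path_image_subset_ball_if_qh_length_less[OF g(1,2) G
          zero_in_frontier_if_local_sector[OF \<alpha> r loc]]) (auto simp: pathstart_def)
  then have "qh_dist ?S x y \<le> qh_length G g"
    by (rule qh_dist_sector_le_if_path_near_vertex[OF \<alpha> r loc g t(1)])
  then show "qh_dist ?S x y \<le> ennreal M" using gM by simp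
qed

theorem mainTheorem15:
  fixes \<alpha> r :: real and G :: "complex set"
  assumes "0 < \<alpha>" "\<alpha> < pi"
    and "open G" "connected G" "G \<noteq> {}" "G \<noteq> UNIV"
    and "r > 0"
    and "G \<inter> ball 0 r = sector \<alpha> \<inter> ball 0 r"
  shows "A_const G \<ge> A_const (sector \<alpha>)"
proof -
  have "{A. A \<ge> 1 \<and> (\<forall>x\<in>G. \<forall>y\<in>G. qh_dist G x y \<le> ennreal (A * j_dist G x y))}
      \<subseteq> {A. A \<ge> 1 \<and> (\<forall>x\<in>sector \<alpha>. \<forall>y\<in>sector \<alpha>.
            qh_dist (sector \<alpha>) x y \<le> ennreal (A * j_dist (sector \<alpha>) x y))}"
    using qh_dist_sector_le_if_local[OF assms(1,3,7,8)] by auto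
  then show ?thesis
    unfolding A_const_def by (intro Inf_superset_mono image_mono)
qed

end
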